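(* Let $\mathcal{N}$ denote the class of all networks $(X,A_X)$, where $X$ is a finite nonempty set and $A_X:X\times X\to\mathbb{R}$ satisfies $A_X(x,x')\ge 0$ for all $x,x'\in X$, with $A_X(x,x')=0$ if and only if $x=x'$ ($A_X$ need not be symmetric nor satisfy the triangle inequality). For a network $(X,A_X)$ define $\bar A_X(x,x')=\max\big(A_X(x,x'),A_X(x',x)\big)$ and $$u^R_X(x,x')=\min_{C(x,x')}\ \max_{0\le i\le l-1}\bar A_X(x_i,x_{i+1}),$$ where the minimum is over all chains $C(x,x')=[x=x_0,x_1,\dots,x_l=x']$ of nodes of $X$ from $x$ to $x'$. Let $\mathcal{H}^R$ be the method assigning to each network $(X,A_X)$ the function $u^R_X$ on $X\times X$. Then: (i) for every network $(X,A_X)\in\mathcal{N}$, $u^R_X$ is an ultrametric on $X$; and (ii) $\mathcal{H}^R$ satisfies the Axiom of Value (A1) and the Axiom of Transformation (A2).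
   Context: An ultrametric on a finite set $X$ is a function $u_X:X\times X\to\mathbb{R}$ that is nonnegative, symmetric ($u_X(x,x')=u_X(x',x)$), satisfies $u_X(x,x')=0$ iff $x=x'$, and satisfies the strong triangle inequality $u_X(x,x')\le\max\big(u_X(x,x''),u_X(x'',x')\big)$ for all $x,x',x''\in X$. A (hierarchical) clustering method $\mathcal{H}$ is a map assigning to every network $(X,A_X)$ an ultrametric $u_X$ on $X$ (equivalently a dendrogram on $X$; $u_X(x,x')$ is the smallest resolution at which $x,x'$ are clustered together). Axiom of Value (A1): for every two-node network $X=\{p,q\}$ with $A_X(p,q)=\alpha$, $A_X(q,p)=\beta$ (with $\alpha,\beta>0$), the output ultrametric satisfies $u_X(p,q)=\max(\alpha,\beta)$. Axiom of Transformation (A2): for any two networks $(X,A_X)$, $(Y,A_Y)$ and any map $\phi:X\to Y$ with $A_X(x,x')\ge A_Y(\phi(x),\phi(x'))$ for all $x,x'\in X$, the output ultrametrics $u_X=\mathcal{H}(X,A_X)$ and $u_Y=\mathcal{H}(Y,A_Y)$ satisfy $u_X(x,x')\ge u_Y(\phi(x),\phi(x'))$ for all $x,x'\in X$. *)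

theory Defs
  imports Complex_Main
begin

definition is_network :: "'a set \<Rightarrow> ('a \<Rightarrow> 'a \<Rightarrow> real) \<Rightarrow> bool" where
  "is_network X A \<longleftrightarrow> finite X \<and> X \<noteq> {} \<and>
     (\<forall>x\<in>X. \<forall>x'\<in>X. A x x' \<ge> 0 \<and> (A x x' = 0 \<longleftrightarrow> x = x'))"

definition ultrametric :: "'a set \<Rightarrow> ('a \<Rightarrow> 'a \<Rightarrow> real) \<Rightarrow> bool" where
  "ultrametric X u \<longleftrightarrow>
     (\<forall>x\<in>X. \<forall>x'\<in>X. u x x' \<ge> 0) \<and>
     (\<forall>x\<in>X. \<forall>x'\<in>X. u x x' = u x' x) \<and>
     (\<forall>x\<in>X. \<forall>x'\<in>X. u x x' = 0 \<longleftrightarrow> x = x') \<and>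
     (\<forall>x\<in>X. \<forall>x'\<in>X. \<forall>x''\<in>X. u x x' \<le> max (u x x'') (u x'' x'))"

definition sym_max :: "('a \<Rightarrow> 'a \<Rightarrow> real) \<Rightarrow> 'a \<Rightarrow> 'a \<Rightarrow> real" where
  "sym_max A x x' = max (A x x') (A x' x)"

definition is_chain :: "'a set \<Rightarrow> 'a \<Rightarrow> 'a \<Rightarrow> 'a list \<Rightarrow> bool" where
  "is_chain X x x' c \<longleftrightarrow> c \<noteq> [] \<and> hd c = x \<and> last c = x' \<and> set c \<subseteq> X"

definition chain_cost :: "('a \<Rightarrow> 'a \<Rightarrow> real) \<Rightarrow> 'a list \<Rightarrow> real" where
  "chain_cost A c = Max (insert 0 {sym_max A (c ! i) (c ! (i+1)) | i. i + 1 < length c})"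

definition u_R :: "'a set \<Rightarrow> ('a \<Rightarrow> 'a \<Rightarrow> real) \<Rightarrow> 'a \<Rightarrow> 'a \<Rightarrow> real" where
  "u_R X A x x' = Min {chain_cost A c | c. is_chain X x x' c}"

end

theory Submission
  imports Defs
begin

text \<open>Concatenating two chains gives a chain whose cost is the maximum of their costs,
  reversing a chain keeps its cost, and a dissimilarity-reducing map sends chains to chains of
  no larger cost. Hence the minimal chain cost u_R satisfies the strong triangle inequality, is
  symmetric, and does not increase under such maps. It is positive between distinct points
  because every chain joining them has a step between distinct points; on two points this step
  is the one between them, which gives the Axiom of Value.\<close>

lemma sym_max_commute: "sym_max A a b = sym_max A b a"
  unfolding sym_max_def by simp

lemma chain_cost_conv_Max_image:
  "chain_cost A c = Max (insert 0 ((\<lambda>i. sym_max A (c ! i) (c ! Suc i)) ` {..<length c - 1}))"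
proof -
  have "{sym_max A (c ! i) (c ! (i+1)) | i. i + 1 < length c}
        = (\<lambda>i. sym_max A (c ! i) (c ! Suc i)) ` {..<length c - 1}"
    by auto
  then show ?thesis
    unfolding chain_cost_def by simp
qed

lemma chain_cost_Nil [simp]: "chain_cost A [] = 0"
  and chain_cost_singleton [simp]: "chain_cost A [a] = 0"
  by (simp_all add: chain_cost_def)

lemma chain_cost_Cons_Cons [simp]:
  "chain_cost A (a # b # r) = max (sym_max A a b) (chain_cost A (b # r))"
proof -
  let ?S = "(\<lambda>i. sym_max A ((b # r) ! i) ((b # r) ! Suc i)) ` {..<length r}"
  have "chain_cost A (a # b # r) = Max (insert (sym_max A a b) (insert 0 ?S))"
    by (simp add: chain_cost_conv_Max_image lessThan_Suc_eq_insert_0 image_image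
        insert_commute del: lessThan_Suc Max_insert)
  also have "\<dots> = max (sym_max A a b) (Max (insert 0 ?S))"
    by (rule Max_insert) auto
  finally show ?thesis
    by (simp add: chain_cost_conv_Max_image del: Max_insert)
qed

lemma chain_cost_nonneg: "0 \<le> chain_cost A c"
  by (simp add: chain_cost_conv_Max_image)

lemma chain_cost_in_step_values:
  "chain_cost A c \<in> insert 0 ((\<lambda>(a, b). sym_max A a b) ` (set c \<times> set c))"
proof -
  let ?S = "(\<lambda>i. sym_max A (c ! i) (c ! Suc i)) ` {..<length c - 1}"
  have "Max (insert 0 ?S) \<in> insert 0 ?S"
    by (rule Max_in) auto
  moreover have "?S \<subseteq> (\<lambda>(a, b). sym_max A a b) ` (set c \<times> set c)"
    by (auto intro!: image_eqI[where x = "(c ! _, c ! Suc _)"])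
  ultimately show ?thesis
    unfolding chain_cost_conv_Max_image by blast
qed

lemma chain_cost_append_tl:
  assumes "c1 \<noteq> []" and "c2 \<noteq> []" and "last c1 = hd c2"
  shows "chain_cost A (c1 @ tl c2) = max (chain_cost A c1) (chain_cost A c2)"
  using assms
proof (induction c1 rule: induct_list012)
  case (2 x)
  then have "[x] @ tl c2 = c2"
    by (cases c2) auto
  then show ?case
    using chain_cost_nonneg[of A c2] by simp
next
  case (3 x y zs)
  then show ?case
    by (simp add: max.assoc)
qed simp

lemma chain_cost_rev: "chain_cost A (rev c) = chain_cost A c"
proof (induction c rule: induct_list012)
  case (3 x y zs)
  have "chain_cost A (rev (y # zs) @ tl [y, x])
        = max (chain_cost A (rev (y # zs))) (chain_cost A [y, x])"
    by (rule chain_cost_append_tl) (simp_all add: last_rev)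
  then show ?case
    using "3.IH"(2) chain_cost_nonneg[of A "y # zs"] by (simp add: sym_max_commute max_def)
qed simp_all

lemma chain_cost_ge_step_between_distinct:
  assumes "c \<noteq> []" and "hd c \<noteq> last c"
  shows "\<exists>a\<in>set c. \<exists>b\<in>set c. a \<noteq> b \<and> sym_max A a b \<le> chain_cost A c"
  using assms
proof (induction c rule: induct_list012)
  case (3 x y zs)
  show ?case
  proof (cases "x = y")
    case True
    then obtain a b where "a \<in> set (y # zs)" "b \<in> set (y # zs)" "a \<noteq> b"
        "sym_max A a b \<le> chain_cost A (y # zs)"
      using "3.IH"(2) "3.prems" by auto
    then show ?thesis
      by (metis chain_cost_Cons_Cons max.coboundedI2 set_subset_Cons subsetD)
  next
    case False
    then show ?thesis
      by (metis chain_cost_Cons_Cons list.set_intros(1,2) max.cobounded1)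
  qed
qed auto

lemma chain_cost_map_le:
  assumes "\<forall>a\<in>set c. \<forall>b\<in>set c. B (\<phi> a) (\<phi> b) \<le> A a b"
  shows "chain_cost B (map \<phi> c) \<le> chain_cost A c"
  using assms
proof (induction c rule: induct_list012)
  case (3 x y zs)
  then have "sym_max B (\<phi> x) (\<phi> y) \<le> sym_max A x y"
    unfolding sym_max_def by (simp add: max.coboundedI1 max.coboundedI2)
  moreover have "chain_cost B (map \<phi> (y # zs)) \<le> chain_cost A (y # zs)"
    using 3 by simp
  ultimately show ?case
    by (simp add: max.coboundedI1 max.coboundedI2)
qed simp_all

lemma finite_chain_costs: "finite X \<Longrightarrow> finite {chain_cost A c | c. is_chain X x x' c}"
  by (rule finite_subset[where B = "insert 0 ((\<lambda>(a, b). sym_max A a b) ` (X \<times> X))"])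
    (use chain_cost_in_step_values in \<open>fastforce simp: is_chain_def\<close>)+

lemma u_R_le_chain_cost: "finite X \<Longrightarrow> is_chain X x x' c \<Longrightarrow> u_R X A x x' \<le> chain_cost A c"
  unfolding u_R_def by (rule Min_le) (auto intro: finite_chain_costs)

lemma u_R_attained:
  assumes "finite X" and "x \<in> X" and "x' \<in> X"
  obtains c where "is_chain X x x' c" and "u_R X A x x' = chain_cost A c"
proof -
  have "is_chain X x x' [x, x']"
    using assms unfolding is_chain_def by simp
  then have "u_R X A x x' \<in> {chain_cost A c | c. is_chain X x x' c}"
    unfolding u_R_def using finite_chain_costs[OF assms(1)] by (intro Min_in) auto
  then show ?thesis
    using that by blast
qed

lemma u_R_nonneg: "finite X \<Longrightarrow> x \<in> X \<Longrightarrow> x' \<in> X \<Longrightarrow> 0 \<le> u_R X A x x'"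
  by (metis u_R_attained chain_cost_nonneg)

lemma u_R_commute:
  assumes "finite X" and "x \<in> X" and "x' \<in> X"
  shows "u_R X A x x' = u_R X A x' x"
proof -
  have "u_R X A y' y \<le> u_R X A y y'" if y: "y \<in> X" "y' \<in> X" for y y'
  proof -
    obtain c where c: "is_chain X y y' c" "u_R X A y y' = chain_cost A c"
      using u_R_attained[OF assms(1) y] .
    then have "is_chain X y' y (rev c)"
      unfolding is_chain_def by (simp add: hd_rev last_rev)
    then show ?thesis
      using u_R_le_chain_cost[OF assms(1)] c(2) by (metis chain_cost_rev)
  qed
  then show ?thesis
    using assms by (meson order_antisym)
qed

lemma u_R_self:
  assumes "finite X" and "x \<in> X"
  shows "u_R X A x x = 0"
proof (rule antisym)
  have "is_chain X x x [x]"
    using assms(2) by (simp add: is_chain_def)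
  then show "u_R X A x x \<le> 0"
    using u_R_le_chain_cost[OF assms(1)] by force
  show "0 \<le> u_R X A x x"
    by (rule u_R_nonneg[OF assms assms(2)])
qed

lemma u_R_pos:
  assumes "is_network X A" and "x \<in> X" and "x' \<in> X" and "x \<noteq> x'"
  shows "0 < u_R X A x x'"
proof -
  obtain c where c: "is_chain X x x' c" "u_R X A x x' = chain_cost A c"
    using u_R_attained assms is_network_def by metis
  then obtain a b where ab: "a \<in> X" "b \<in> X" "a \<noteq> b" "sym_max A a b \<le> chain_cost A c"
    using chain_cost_ge_step_between_distinct[of c A] assms(4) unfolding is_chain_def by blast
  then have "0 < A a b"
    using assms(1) unfolding is_network_def by force
  then show ?thesis
    using ab(4) c(2) unfolding sym_max_def by linarith
qed

lemma u_R_strong_triangle: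
  assumes "finite X" and "x \<in> X" and "x' \<in> X" and "x'' \<in> X"
  shows "u_R X A x x' \<le> max (u_R X A x x'') (u_R X A x'' x')"
proof -
  obtain c1 where c1: "is_chain X x x'' c1" "u_R X A x x'' = chain_cost A c1"
    using u_R_attained assms by metis
  obtain c2 where c2: "is_chain X x'' x' c2" "u_R X A x'' x' = chain_cost A c2"
    using u_R_attained assms by metis
  have "is_chain X x x' (c1 @ tl c2)"
    using c1(1) c2(1) unfolding is_chain_def by (cases c2) auto
  then have "u_R X A x x' \<le> chain_cost A (c1 @ tl c2)"
    by (rule u_R_le_chain_cost[OF assms(1)])
  also have "\<dots> = max (chain_cost A c1) (chain_cost A c2)"
    using c1(1) c2(1) by (intro chain_cost_append_tl) (auto simp: is_chain_def)
  finally show ?thesis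
    using c1(2) c2(2) by simp
qed

lemma ultrametric_u_R:
  assumes "is_network X A"
  shows "ultrametric X (u_R X A)"
proof -
  have fin: "finite X"
    using assms unfolding is_network_def by simp
  show ?thesis
    unfolding ultrametric_def
  proof (intro conjI ballI)
    show "u_R X A x x' = 0 \<longleftrightarrow> x = x'" if "x \<in> X" "x' \<in> X" for x x'
      using that u_R_self[OF fin] u_R_pos[OF assms] by force
    show "u_R X A x x' \<le> max (u_R X A x x'') (u_R X A x'' x')"
      if "x \<in> X" "x' \<in> X" "x'' \<in> X" for x x' x''
      using u_R_strong_triangle[OF fin that] .
  qed (simp_all add: fin u_R_nonneg u_R_commute)
qed

lemma u_R_two_points:
  assumes "p \<noteq> q"
  shows "u_R {p, q} A p q = max 0 (sym_max A p q)"
proof (rule antisym)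
  show "u_R {p, q} A p q \<le> max 0 (sym_max A p q)"
    using u_R_le_chain_cost[of "{p, q}" p q "[p, q]" A] by (simp add: is_chain_def max.commute)
  obtain c where c: "is_chain {p, q} p q c" "u_R {p, q} A p q = chain_cost A c"
    using u_R_attained[of "{p, q}" p q] by blast
  then obtain a b where "a \<in> {p, q}" "b \<in> {p, q}" "a \<noteq> b" "sym_max A a b \<le> chain_cost A c"
    using chain_cost_ge_step_between_distinct[of c A] assms unfolding is_chain_def by blast
  then show "max 0 (sym_max A p q) \<le> u_R {p, q} A p q"
    using c(2) chain_cost_nonneg[of A c] by (auto simp: sym_max_commute)
qed

lemma u_R_map_le:
  assumes "finite X" and "finite Y" and "\<phi> ` X \<subseteq> Y"
    and "\<forall>x\<in>X. \<forall>x'\<in>X. B (\<phi> x) (\<phi> x') \<le> A x x'"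
    and "x \<in> X" and "x' \<in> X"
  shows "u_R Y B (\<phi> x) (\<phi> x') \<le> u_R X A x x'"
proof -
  obtain c where c: "is_chain X x x' c" "u_R X A x x' = chain_cost A c"
    using u_R_attained assms(1,5,6) by metis
  then have "is_chain Y (\<phi> x) (\<phi> x') (map \<phi> c)"
    using assms(3) unfolding is_chain_def by (auto simp: hd_map last_map)
  then have "u_R Y B (\<phi> x) (\<phi> x') \<le> chain_cost B (map \<phi> c)"
    by (rule u_R_le_chain_cost[OF assms(2)])
  also have "\<dots> \<le> chain_cost A c"
    using c(1) assms(4) unfolding is_chain_def by (intro chain_cost_map_le) blast
  finally show ?thesis
    using c(2) by simp
qed

theorem proposition1:
  shows "(\<forall>(X :: 'a set) A. is_network X A \<longrightarrow> ultrametric X (u_R X A))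
    \<and> (\<forall>(p :: 'a) q A \<alpha> \<beta>. p \<noteq> q \<and> \<alpha> > 0 \<and> \<beta> > 0 \<and> A p q = \<alpha> \<and> A q p = \<beta>
           \<and> A p p = 0 \<and> A q q = 0 \<longrightarrow> u_R {p, q} A p q = max \<alpha> \<beta>)
    \<and> (\<forall>(X :: 'a set) (A :: 'a \<Rightarrow> 'a \<Rightarrow> real) (Y :: 'b set) (B :: 'b \<Rightarrow> 'b \<Rightarrow> real) \<phi>.
          is_network X A \<and> is_network Y B \<and> \<phi> ` X \<subseteq> Y
          \<and> (\<forall>x\<in>X. \<forall>x'\<in>X. A x x' \<ge> B (\<phi> x) (\<phi> x'))
          \<longrightarrow> (\<forall>x\<in>X. \<forall>x'\<in>X. u_R X A x x' \<ge> u_R Y B (\<phi> x) (\<phi> x')))"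
proof (intro conjI allI impI ballI)
  show "is_network X A \<Longrightarrow> ultrametric X (u_R X A)" for X :: "'a set" and A
    by (rule ultrametric_u_R)
  show "u_R {p, q} A p q = max \<alpha> \<beta>"
    if "p \<noteq> q \<and> \<alpha> > 0 \<and> \<beta> > 0 \<and> A p q = \<alpha> \<and> A q p = \<beta> \<and> A p p = 0 \<and> A q q = 0"
    for p q :: 'a and A and \<alpha> \<beta> :: real
    using that u_R_two_points[of p q A] by (simp add: sym_max_def max_def)
  show "u_R Y B (\<phi> x) (\<phi> x') \<le> u_R X A x x'"
    if "is_network X A \<and> is_network Y B \<and> \<phi> ` X \<subseteq> Y
          \<and> (\<forall>x\<in>X. \<forall>x'\<in>X. A x x' \<ge> B (\<phi> x) (\<phi> x'))" and "x \<in> X" and "x' \<in> X"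
    for X :: "'a set" and A and Y :: "'b set" and B \<phi> x x'
    using that by (intro u_R_map_le) (auto simp: is_network_def)
qed

end
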